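(* Let $n\geq 1$ and $k\geq 1$ be integers and $d_1,\dots,d_k$ positive integers with $\sum_{i=1}^k d_i=n+1$. For $0\leq j\leq n$, let $S_j(n;d_1,\dots,d_k)$ denote the coefficient of $t^{n-j}$ in $n!\,F_n(t;d_1,\dots,d_k)$. Then $$S_j(n;d_1,\dots,d_k)=\begin{cases}2S_j(n;d_1,\dots,d_{k-1}) & \text{if } k+j \text{ is even},\\ 0 & \text{if } k+j\text{ is odd}.\end{cases}$$
   Context: For an integer $m>0$, $\binom{t}{m}=\frac{1}{m!}\prod_{i=0}^{m-1}(t-i)$. For $I\subset\{1,\dots,k\}$, $d_I=\sum_{i\in I}d_i$ (with $d_\emptyset=0$). For integers $m>0$, $k\geq 0$ and positive integers $d_1,\dots,d_k$, define $F_m(t;d_1,\dots,d_k)=\sum_{I\subset\{1,\dots,k\}}(-1)^{|I|}\binom{t+m-d_I}{m}$; its degree in $t$ is at most $m$. $S_j(n;d_1,\dots,d_{k-1})$ is defined analogously as the coefficient of $t^{n-j}$ in $n!\,F_n(t;d_1,\dots,d_{k-1})$. *)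

theory Defs
  imports "HOL-Computational_Algebra.Polynomial"
begin

definition binom_poly :: "int \<Rightarrow> nat \<Rightarrow> real poly" where
  "binom_poly c m = smult (1 / fact m) (\<Prod>i<m. [: of_int c - of_nat i, 1 :])"

definition dsum :: "(nat \<Rightarrow> nat) \<Rightarrow> nat set \<Rightarrow> nat" where
  "dsum d I = (\<Sum>i\<in>I. d i)"

definition F_poly :: "nat \<Rightarrow> (nat \<Rightarrow> nat) \<Rightarrow> nat \<Rightarrow> real poly" where
  "F_poly m d k = (\<Sum>I\<in>Pow {1..k}.
      smult ((-1) ^ card I) (binom_poly (int m - int (dsum d I)) m))"

definition S_coeff :: "nat \<Rightarrow> nat \<Rightarrow> (nat \<Rightarrow> nat) \<Rightarrow> nat \<Rightarrow> real" where
  "S_coeff j n d k = coeff (smult (fact n) (F_poly n d k)) (n - j)"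

end

theory Submission
  imports Defs
begin

text \<open>Peeling off the last index gives F_k(t) = F_{k-1}(t) - F_{k-1}(t - d_k). The identity
  binom(y, m) = (-1)^m binom(m - 1 - y, m), applied termwise after the substitution I \<mapsto> complement
  of I, shows that F_{k-1} is (anti)symmetric about (d_1 + ... + d_{k-1} - n - 1)/2; when the d_i sum
  to n + 1 this turns F_{k-1}(t - d_k) into \<plusminus>F_{k-1}(-t). Hence F_k is F_{k-1} plus or minus its
  mirror image, which doubles or kills each coefficient according to the parity of k + j.\<close>

lemma poly_binom_poly: "poly (binom_poly c m) x = (x + of_int c) gchoose m"
  by (simp add: binom_poly_def poly_prod gbinomial_prod_rev atLeast0LessThan
      algebra_simps)

lemma poly_F_poly:
  "poly (F_poly m d k) x =
     (\<Sum>I\<in>Pow {1..k}. (-1) ^ card I * ((x + real m - real (dsum d I)) gchoose m))"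
  by (simp add: F_poly_def poly_sum poly_binom_poly add_diff_eq)

lemma poly_F_poly_Suc:
  "poly (F_poly m d (Suc k)) x = poly (F_poly m d k) x - poly (F_poly m d k) (x - real (d (Suc k)))"
proof -
  let ?A = "{1..k}"
  let ?f = "\<lambda>x I. (-1::real) ^ card I * ((x + real m - real (dsum d I)) gchoose m)"
  have A: "{1..Suc k} = insert (Suc k) ?A" "Suc k \<notin> ?A" by auto
  have "poly (F_poly m d (Suc k)) x = (\<Sum>I\<in>Pow ?A. ?f x I) + (\<Sum>I\<in>insert (Suc k) ` Pow ?A. ?f x I)"
    unfolding poly_F_poly A(1) Pow_insert by (rule sum.union_disjoint) (use A(2) in auto)
  also have "(\<Sum>I\<in>insert (Suc k) ` Pow ?A. ?f x I) = (\<Sum>I\<in>Pow ?A. ?f x (insert (Suc k) I))"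
    by (rule sum.reindex_bij_witness[of _ "insert (Suc k)" "\<lambda>I. I - {Suc k}"]) auto
  also have "\<dots> = - (\<Sum>I\<in>Pow ?A. ?f (x - real (d (Suc k))) I)"
    unfolding sum_negf[symmetric]
  proof (rule sum.cong)
    fix I assume "I \<in> Pow ?A"
    then have "finite I" "Suc k \<notin> I" using finite_subset by auto
    then show "?f x (insert (Suc k) I) = - ?f (x - real (d (Suc k))) I"
      by (simp add: dsum_def algebra_simps)
  qed simp
  finally show ?thesis by (simp add: poly_F_poly)
qed

lemma poly_F_poly_reflect:
  "poly (F_poly m d k) x = (-1) ^ (k + m) * poly (F_poly m d k) (real (dsum d {1..k}) - real m - 1 - x)"
proof -
  let ?A = "{1..k}"
  let ?D = "real (dsum d ?A)"
  let ?f = "\<lambda>x I. (-1::real) ^ card I * ((x + real m - real (dsum d I)) gchoose m)"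
  have "poly (F_poly m d k) x = (\<Sum>I\<in>Pow ?A. ?f x (?A - I))"
    unfolding poly_F_poly
    by (rule sum.reindex_bij_witness[of _ "\<lambda>I. ?A - I" "\<lambda>I. ?A - I"]) (auto simp: double_diff)
  also have "\<dots> = (\<Sum>I\<in>Pow ?A. (-1) ^ (k + m) * ?f (?D - real m - 1 - x) I)"
  proof (rule sum.cong)
    fix I assume "I \<in> Pow ?A"
    then have I: "finite I" "I \<subseteq> ?A" using finite_subset by auto
    then have "card I \<le> k" using card_mono[of ?A I] by simp
    then have sign: "(-1::real) ^ card (?A - I) = (-1) ^ k * (-1) ^ card I"
      using I by (simp add: card_Diff_subset minus_one_power_iff)
    have complement: "real (dsum d (?A - I)) = ?D - real (dsum d I)"
      unfolding dsum_def using sum.subset_diff[OF I(2), of d] by simp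
    show "?f x (?A - I) = (-1) ^ (k + m) * ?f (?D - real m - 1 - x) I"
      unfolding sign complement
      by (subst gbinomial_negated_upper) (simp add: power_add algebra_simps)
  qed simp
  finally show ?thesis by (simp add: poly_F_poly sum_distrib_left)
qed

lemma F_poly_Suc_eq_reflect:
  assumes "dsum d {1..Suc k} = m + 1"
  shows "F_poly m d (Suc k) = F_poly m d k - smult ((-1) ^ (k + m)) (F_poly m d k \<circ>\<^sub>p [:0, -1:])"
proof (rule poly_eq_poly_eq_iff[THEN iffD1], rule ext)
  fix x
  have "dsum d {1..k} + d (Suc k) = m + 1"
    using assms by (simp add: dsum_def)
  then have "real (dsum d {1..k}) + real (d (Suc k)) = real m + 1"
    by (metis of_nat_1 of_nat_add)
  then have reflected: "real (dsum d {1..k}) - real m - 1 - (x - real (d (Suc k))) = -x"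
    by simp
  show "poly (F_poly m d (Suc k)) x =
      poly (F_poly m d k - smult ((-1) ^ (k + m)) (F_poly m d k \<circ>\<^sub>p [:0, -1:])) x"
    unfolding poly_diff poly_smult poly_pcompose poly_F_poly_Suc
    by (subst poly_F_poly_reflect[of m d k "x - real (d (Suc k))"], unfold reflected) simp
qed

theorem lemma3p5:
  fixes n k j :: nat and d :: "nat \<Rightarrow> nat"
  assumes "n \<ge> 1" and "k \<ge> 1"
    and "\<forall>i\<in>{1..k}. d i > 0"
    and "(\<Sum>i=1..k. d i) = n + 1"
    and "j \<le> n"
  shows "S_coeff j n d k =
           (if even (k + j) then 2 * S_coeff j n d (k - 1) else 0)"
proof -
  obtain k' where k: "k = Suc k'" using assms(2) by (cases k) auto
  let ?c = "coeff (F_poly n d k') (n - j)"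
  have "F_poly n d k = F_poly n d k' - smult ((-1) ^ (k' + n)) (F_poly n d k' \<circ>\<^sub>p [:0, -1:])"
    using assms(4) unfolding k by (intro F_poly_Suc_eq_reflect) (simp add: dsum_def)
  then have "S_coeff j n d k = fact n * (?c - (-1) ^ (k' + n) * (-1) ^ (n - j) * ?c)"
    by (simp add: S_coeff_def coeff_pcompose_linear)
  also have "(-1::real) ^ (k' + n) * (-1) ^ (n - j) = - ((-1) ^ (k + j))"
  proof -
    have "Suc (k' + n + (n - j)) = k + j + 2 * (n - j)"
      using assms(5) k by simp
    then have "(-1::real) ^ Suc (k' + n + (n - j)) = (-1) ^ (k + j)"
      by (metis power_add power_minus1_even mult_1_right)
    then show ?thesis by (simp add: power_add)
  qed
  finally have "S_coeff j n d k = fact n * ?c * (1 + (-1) ^ (k + j))"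
    by (simp add: algebra_simps)
  moreover have "S_coeff j n d (k - 1) = fact n * ?c"
    by (simp add: S_coeff_def k)
  ultimately show ?thesis by simp
qed

end
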